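(* Let $A,B,E$ be finite-dimensional, $U:\mathcal{H}_A\to\mathcal{H}_B\otimes\mathcal{H}_E$ an isometry and $V:\mathcal{H}_A\to\mathcal{H}_B\otimes\mathcal{H}_E$ a linear operator, with $\mathcal{U}(X)=UXU^\dagger$, $\mathcal{V}(X)=VXV^\dagger$. For every $n\ge1$, the sets $\mathsf{A}_n$ and $\mathsf{B}_n$ defined in the context are convex.
   Context: Let $A_i\cong A$, $B_i\cong B$, $E_i\cong E$ for $i=1,\dots,n$, let $R_0,E_0$ be trivial (one-dimensional) and $R_1,\dots,R_n$ finite-dimensional systems of arbitrary dimension. For quantum channels (CPTP maps) $\mathcal{P}^i$ from $R_{i-1}E_{i-1}$ to $A_iR_i$, set $\rho[\{\mathcal{P}^i\}_{i=1}^n]=\operatorname{tr}_{R_nE_n}\,\mathcal{U}_{A_n\to B_nE_n}\circ\mathcal{P}^n\circ\cdots\circ\mathcal{U}_{A_1\to B_1E_1}\circ\mathcal{P}^1$ (applied to the trivial input $1$), an operator on $B_1\cdots B_n$; similarly $\sigma[\{\mathcal{Q}^i\}_{i=1}^n]=\operatorname{tr}_{R_nE_n}\,\mathcal{V}\circ\mathcal{Q}^n\circ\cdots\circ\mathcal{V}\circ\mathcal{Q}^1$ for quantum channels $\mathcal{Q}^i$ from $R_{i-1}E_{i-1}$ to $A_iR_i$. $\mathsf{A}_n$ is the set of all $\rho[\{\mathcal{P}^i\}]$ and $\mathsf{B}_n$ the set of all $\sigma[\{\mathcal{Q}^i\}]$, ranging over all dimensions of the $R_i$ and all such channels. *)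

theory Defs
  imports "HOL-Analysis.Analysis" "Jordan_Normal_Form.Matrix"
begin

text \<open>Operators on a d-dimensional Hilbert space are complex d x d matrices.
Tensor-product index convention: for a factor of dimension p and one of dimension s,
the basis pair (a,b) has index a*s+b.\<close>

definition mtrace :: "complex mat \<Rightarrow> complex" where
  "mtrace X = (\<Sum>i<dim_row X. X $$ (i,i))"

definition dagger :: "complex mat \<Rightarrow> complex mat" where
  "dagger A = mat (dim_col A) (dim_row A) (\<lambda>(i,j). cnj (A $$ (j,i)))"

definition kron :: "complex mat \<Rightarrow> complex mat \<Rightarrow> complex mat" where
  "kron A B = mat (dim_row A * dim_row B) (dim_col A * dim_col B)
     (\<lambda>(i,j). A $$ (i div dim_row B, j div dim_col B) * B $$ (i mod dim_row B, j mod dim_col B))"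

definition psd :: "nat \<Rightarrow> complex mat \<Rightarrow> bool" where
  "psd d X \<longleftrightarrow> X \<in> carrier_mat d d \<and>
     (\<forall>v \<in> carrier_vec d.
        (\<Sum>i<d. \<Sum>j<d. cnj (v $ i) * X $$ (i,j) * v $ j) \<in> \<real> \<and>
        0 \<le> Re (\<Sum>i<d. \<Sum>j<d. cnj (v $ i) * X $$ (i,j) * v $ j))"

text \<open>(id_m \<otimes> Phi)(X) for X an operator on C^m \<otimes> C^din, Phi from din to dout.\<close>
definition lift_map :: "nat \<Rightarrow> nat \<Rightarrow> nat \<Rightarrow> (complex mat \<Rightarrow> complex mat) \<Rightarrow> complex mat \<Rightarrow> complex mat" where
  "lift_map m din dout Phi X = mat (m * dout) (m * dout)
     (\<lambda>(i,j). Phi (mat din din (\<lambda>(k,l). X $$ ((i div dout) * din + k, (j div dout) * din + l)))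
              $$ (i mod dout, j mod dout))"

definition cptp :: "nat \<Rightarrow> nat \<Rightarrow> (complex mat \<Rightarrow> complex mat) \<Rightarrow> bool" where
  "cptp din dout Phi \<longleftrightarrow>
     (\<forall>X \<in> carrier_mat din din. Phi X \<in> carrier_mat dout dout) \<and>
     (\<forall>X \<in> carrier_mat din din. \<forall>Y \<in> carrier_mat din din. Phi (X + Y) = Phi X + Phi Y) \<and>
     (\<forall>c. \<forall>X \<in> carrier_mat din din. Phi (c \<cdot>\<^sub>m X) = c \<cdot>\<^sub>m Phi X) \<and>
     (\<forall>X \<in> carrier_mat din din. mtrace (Phi X) = mtrace X) \<and>
     (\<forall>k X. psd (k * din) X \<longrightarrow> psd (k * dout) (lift_map k din dout Phi X))"

text \<open>Partial trace over the last factor (dimension k) of C^m \<otimes> C^k.\<close>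
definition ptrace :: "nat \<Rightarrow> nat \<Rightarrow> complex mat \<Rightarrow> complex mat" where
  "ptrace m k X = mat m m (\<lambda>(i,j). \<Sum>l<k. X $$ (i * k + l, j * k + l))"

text \<open>Dimension of the memory system E_i R_i (ordered as E_i \<otimes> R_i); E_0 R_0 is trivial.\<close>
definition reg_dim :: "nat \<Rightarrow> (nat \<Rightarrow> nat) \<Rightarrow> nat \<Rightarrow> nat" where
  "reg_dim dE r i = (if i = 0 then 1 else dE * r i)"

text \<open>State on B_1...B_i \<otimes> E_i \<otimes> R_i after i rounds, where round i applies the channel
P i : E_{i-1}R_{i-1} \<rightarrow> A_i R_i followed by X \<mapsto> W X W^\<dagger> on A_i (W : A \<rightarrow> B \<otimes> E).\<close>
fun seq_state :: "nat \<Rightarrow> nat \<Rightarrow> nat \<Rightarrow> complex mat \<Rightarrow> (nat \<Rightarrow> nat)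
                   \<Rightarrow> (nat \<Rightarrow> complex mat \<Rightarrow> complex mat) \<Rightarrow> nat \<Rightarrow> complex mat" where
  "seq_state dA dB dE W r P 0 = 1\<^sub>m 1"
| "seq_state dA dB dE W r P (Suc i) =
     (let X = lift_map (dB ^ i) (reg_dim dE r i) (dA * r (Suc i)) (P (Suc i))
                (seq_state dA dB dE W r P i);
          W' = kron (kron (1\<^sub>m (dB ^ i)) W) (1\<^sub>m (r (Suc i)))
      in W' * X * dagger W')"

text \<open>rho[{P^i}] = tr_{R_n E_n} (W-conjugation \<circ> P^n \<circ> ... \<circ> W-conjugation \<circ> P^1)(1).\<close>
definition seq_output :: "nat \<Rightarrow> nat \<Rightarrow> nat \<Rightarrow> complex mat \<Rightarrow> (nat \<Rightarrow> nat)
                   \<Rightarrow> (nat \<Rightarrow> complex mat \<Rightarrow> complex mat) \<Rightarrow> nat \<Rightarrow> complex mat" where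
  "seq_output dA dB dE W r P n = ptrace (dB ^ n) (reg_dim dE r n) (seq_state dA dB dE W r P n)"

text \<open>The set of all outputs, over all dimensions r_1..r_n \<ge> 1 and all channels.
With W = U this is A_n, with W = V it is B_n.\<close>
definition seq_set :: "nat \<Rightarrow> nat \<Rightarrow> nat \<Rightarrow> complex mat \<Rightarrow> nat \<Rightarrow> complex mat set" where
  "seq_set dA dB dE W n = {seq_output dA dB dE W r P n | r P.
      \<forall>i. 1 \<le> i \<and> i \<le> n \<longrightarrow> 0 < r i \<and> cptp (reg_dim dE r (i - 1)) (dA * r i) (P i)}"

definition convex_mat_set :: "complex mat set \<Rightarrow> bool" where
  "convex_mat_set S \<longleftrightarrow> (\<forall>x \<in> S. \<forall>y \<in> S. \<forall>t::real. 0 \<le> t \<and> t \<le> 1 \<longrightarrow>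
      complex_of_real t \<cdot>\<^sub>m x + complex_of_real (1 - t) \<cdot>\<^sub>m y \<in> S)"

end

theory Submission
  imports Defs
begin

text \<open>
  Given two protocols \<open>(r, P)\<close> and \<open>(r', P')\<close> and a weight \<open>t \<in> [0, 1]\<close>, run them side by side
  on the registers \<open>R\<^sub>i \<oplus> R'\<^sub>i\<close>. The first channel prepares \<open>t P\<^sup>1 \<oplus> (1 - t) P'\<^sup>1\<close>; every later
  channel splits its input \<open>E (R \<oplus> R')\<close> into the blocks \<open>E R\<close> and \<open>E R'\<close>, applies the channel of the
  respective protocol to each and pads the results back into \<open>A (R \<oplus> R')\<close>. The map
  \<open>X \<mapsto> W X W\<^sup>\<dagger>\<close> acts on \<open>A\<^sub>i\<close> only and therefore respects this block structure, so after round
  \<open>i\<close> the state is the direct sum \<open>t \<rho>\<^sub>i \<oplus> (1 - t) \<rho>'\<^sub>i\<close>, and tracing out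
  \<open>E\<^sub>n (R\<^sub>n \<oplus> R'\<^sub>n)\<close> leaves \<open>t \<rho> + (1 - t) \<rho>'\<close>.
\<close>

(* Reserve $ for the vector index of Jordan_Normal_Form; HOL-Analysis uses it for vec_nth. *)
no_notation vec_nth (infixl "$" 90)

lemma sum_lessThan_add: "(\<Sum>i<a + (b::nat). f i) = (\<Sum>i<a. f i) + (\<Sum>j<b. f (a + j))"
  by (induct b) (simp_all add: add.assoc)

lemma sum_swap_inner_outer:
  "(\<Sum>i\<in>A. \<Sum>j\<in>B. \<Sum>k\<in>C. \<Sum>l\<in>D. f i j k l) = (\<Sum>k\<in>C. \<Sum>l\<in>D. \<Sum>i\<in>A. \<Sum>j\<in>B. f i j k l)"
proof -
  have "(\<Sum>i\<in>A. \<Sum>j\<in>B. \<Sum>k\<in>C. \<Sum>l\<in>D. f i j k l) = (\<Sum>i\<in>A. \<Sum>k\<in>C. \<Sum>j\<in>B. \<Sum>l\<in>D. f i j k l)"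
    by (rule sum.cong[OF refl], rule sum.swap)
  also have "\<dots> = (\<Sum>i\<in>A. \<Sum>k\<in>C. \<Sum>l\<in>D. \<Sum>j\<in>B. f i j k l)"
    by (rule sum.cong[OF refl], rule sum.cong[OF refl], rule sum.swap)
  also have "\<dots> = (\<Sum>k\<in>C. \<Sum>i\<in>A. \<Sum>l\<in>D. \<Sum>j\<in>B. f i j k l)"
    by (rule sum.swap)
  also have "\<dots> = (\<Sum>k\<in>C. \<Sum>l\<in>D. \<Sum>i\<in>A. \<Sum>j\<in>B. f i j k l)"
    by (rule sum.cong[OF refl], rule sum.swap)
  finally show ?thesis .
qed

lemma mult_add_less:
  assumes "a < k" "b < d" shows "a * d + b < k * (d::nat)"
proof -
  have "a * d + b < (a + 1) * d" using assms(2) by simp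
  also have "\<dots> \<le> k * d" using assms(1) by (intro mult_le_mono1) simp
  finally show ?thesis .
qed

lemma mult_add_less3: "u < p \<Longrightarrow> x < d \<Longrightarrow> l < n \<Longrightarrow> l + (x + u * d) * n < p * d * (n::nat)"
  using mult_add_less[of "x + u * d" "p * d" l n] mult_add_less[of u p x d] by (simp add: add.commute)

lemma mod_less_of_less_mult: "i < k * d \<Longrightarrow> i mod d < (d::nat)"
  by (cases "d = 0") auto

lemma div_mod_less_of_less_mult:
  assumes "i < p * d * (n::nat)"
  shows "i div n < p * d" "i div n div d < p" "i mod n < n"
proof -
  show "i div n < p * d" using assms by (rule less_mult_imp_div_less)
  then show "i div n div d < p" by (rule less_mult_imp_div_less)
  show "i mod n < n" using assms by (rule mod_less_of_less_mult)
qed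

lemma mod_mult_mod: "i mod (m * d) mod d = i mod (d::nat)"
  by (simp add: mod_mod_cancel)

lemma div_mult_add_mod: "i div (m * d) * m + i mod (m * d) div d = i div (d::nat)"
proof -
  have "i mod (d * m) = d * (i div d mod m) + i mod d" by (rule mod_mult2_eq)
  moreover have "i div (d * m) = i div d div m" by (rule div_mult2_eq)
  ultimately show ?thesis by (cases "d = 0") (simp_all add: mult.commute div_mult_mod_eq)
qed

section \<open>Positive semidefinite matrices\<close>

definition qform :: "nat \<Rightarrow> complex mat \<Rightarrow> complex vec \<Rightarrow> complex" where
  "qform d X v = (\<Sum>i<d. \<Sum>j<d. cnj (v $ i) * X $$ (i,j) * v $ j)"

lemma psd_iff_qform:
  "psd d X \<longleftrightarrow>
     X \<in> carrier_mat d d \<and> (\<forall>v \<in> carrier_vec d. qform d X v \<in> \<real> \<and> 0 \<le> Re (qform d X v))"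
  unfolding psd_def qform_def by simp

lemma psd_congruence:
  assumes Y: "psd m Y" and Z: "Z \<in> carrier_mat n n"
    and entries: "\<And>i j. i < n \<Longrightarrow> j < n \<Longrightarrow>
      Z $$ (i,j) = (\<Sum>k<m. \<Sum>l<m. cnj (M k i) * Y $$ (k,l) * M l j)"
  shows "psd n Z"
  unfolding psd_iff_qform
proof (rule conjI[OF Z], rule ballI)
  fix v :: "complex vec"
  define w where "w = vec m (\<lambda>k. \<Sum>j<n. M k j * v $ j)"
  have "qform n Z v
      = (\<Sum>i<n. \<Sum>j<n. cnj (v $ i) * (\<Sum>k<m. \<Sum>l<m. cnj (M k i) * Y $$ (k,l) * M l j) * v $ j)"
    unfolding qform_def using entries by simp
  also have "\<dots> = (\<Sum>i<n. \<Sum>j<n. \<Sum>k<m. \<Sum>l<m. cnj (v $ i) * cnj (M k i) * Y $$ (k,l) * M l j * v $ j)"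
    by (simp add: sum_distrib_left sum_distrib_right mult.assoc)
  also have "\<dots> = (\<Sum>k<m. \<Sum>l<m. \<Sum>i<n. \<Sum>j<n. cnj (v $ i) * cnj (M k i) * Y $$ (k,l) * M l j * v $ j)"
    by (rule sum_swap_inner_outer)
  also have "\<dots> = qform m Y w"
    unfolding qform_def w_def
    by (simp add: sum_distrib_left sum_distrib_right mult.assoc mult.commute mult.left_commute)
  finally have "qform n Z v = qform m Y w" .
  moreover have "w \<in> carrier_vec m" unfolding w_def by simp
  ultimately show "qform n Z v \<in> \<real> \<and> 0 \<le> Re (qform n Z v)"
    using Y unfolding psd_iff_qform by simp
qed

lemma psd_add: assumes "psd d A" "psd d B" shows "psd d (A + B)"
proof -
  have A: "A \<in> carrier_mat d d" and B: "B \<in> carrier_mat d d" using assms psd_def by auto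
  have q: "qform d (A + B) v = qform d A v + qform d B v" for v
    unfolding qform_def using A B by (simp add: algebra_simps sum.distrib)
  show ?thesis using assms unfolding psd_iff_qform q using A B by auto
qed

lemma psd_smult: assumes "psd d A" "0 \<le> c" shows "psd d (complex_of_real c \<cdot>\<^sub>m A)"
proof -
  have A: "A \<in> carrier_mat d d" using assms psd_def by auto
  have q: "qform d (complex_of_real c \<cdot>\<^sub>m A) v = complex_of_real c * qform d A v" for v
    unfolding qform_def using A by (simp add: algebra_simps sum_distrib_left)
  have "qform d A v \<in> \<real> \<Longrightarrow> complex_of_real c * qform d A v \<in> \<real>" for v by simp
  then show ?thesis using assms unfolding psd_iff_qform q using A by auto
qed

text \<open>
  Principal submatrices and zero paddings are both of the following form; positivity is preserved
  because \<open>reindex_mat n c h Y = M\<^sup>\<dagger> Y M\<close> for a \<open>0/1\<close>-matrix \<open>M\<close>.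
\<close>
definition reindex_mat :: "nat \<Rightarrow> (nat \<Rightarrow> bool) \<Rightarrow> (nat \<Rightarrow> nat) \<Rightarrow> complex mat \<Rightarrow> complex mat" where
  "reindex_mat n c h Y = mat n n (\<lambda>(a,b). if c a \<and> c b then Y $$ (h a, h b) else 0)"

lemma reindex_mat_carrier [simp]: "reindex_mat n c h Y \<in> carrier_mat n n"
  and reindex_mat_dims [simp]: "dim_row (reindex_mat n c h Y) = n" "dim_col (reindex_mat n c h Y) = n"
  unfolding reindex_mat_def by simp_all

lemma reindex_mat_index [simp]:
  "a < n \<Longrightarrow> b < n \<Longrightarrow> reindex_mat n c h Y $$ (a,b) = (if c a \<and> c b then Y $$ (h a, h b) else 0)"
  unfolding reindex_mat_def by simp

lemma mtrace_reindex_mat: "mtrace (reindex_mat n c h Y) = (\<Sum>a<n. if c a then Y $$ (h a, h a) else 0)"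
  unfolding mtrace_def by simp

lemma psd_reindex_mat:
  assumes Y: "psd m Y" and h: "\<And>a. a < n \<Longrightarrow> c a \<Longrightarrow> h a < m"
  shows "psd n (reindex_mat n c h Y)"
proof (rule psd_congruence[OF Y reindex_mat_carrier, where M = "\<lambda>k a. if c a \<and> k = h a then 1 else 0"])
  fix a b assume ab: "a < n" "b < n"
  let ?M = "\<lambda>k a. if c a \<and> k = h a then 1 else 0 :: complex"
  show "reindex_mat n c h Y $$ (a, b) = (\<Sum>k<m. \<Sum>l<m. cnj (?M k a) * Y $$ (k, l) * ?M l b)"
  proof (cases "c a \<and> c b")
    case True
    then have "reindex_mat n c h Y $$ (a, b) = Y $$ (h a, h b)" using ab by simp
    also have "\<dots> = (\<Sum>k<m. if k = h a then (\<Sum>l<m. if l = h b then Y $$ (k, l) else 0) else 0)"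
      using h ab True by simp
    also have "\<dots> = (\<Sum>k<m. \<Sum>l<m. if k = h a then (if l = h b then Y $$ (k, l) else 0) else 0)"
      by (intro sum.cong refl) auto
    also have "\<dots> = (\<Sum>k<m. \<Sum>l<m. cnj (?M k a) * Y $$ (k, l) * ?M l b)"
      using True by (intro sum.cong refl) auto
    finally show ?thesis .
  next
    case False
    have "(\<Sum>k<m. \<Sum>l<m. cnj (?M k a) * Y $$ (k, l) * ?M l b) = 0"
      using False by (intro sum.neutral ballI) auto
    moreover have "reindex_mat n c h Y $$ (a, b) = 0" using ab False by auto
    ultimately show ?thesis by simp
  qed
qed

definition principal_submat :: "nat \<Rightarrow> nat \<Rightarrow> complex mat \<Rightarrow> complex mat" where
  "principal_submat off k = reindex_mat k (\<lambda>_. True) (\<lambda>a. off + a)"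

definition zero_pad :: "nat \<Rightarrow> nat \<Rightarrow> nat \<Rightarrow> complex mat \<Rightarrow> complex mat" where
  "zero_pad n off k = reindex_mat n (\<lambda>a. off \<le> a \<and> a < off + k) (\<lambda>a. a - off)"

lemma principal_submat_zero_pad:
  assumes "off + k \<le> n" "Y \<in> carrier_mat k k"
  shows "principal_submat off k (zero_pad n off k Y) = Y"
  by (rule eq_matI) (use assms in \<open>auto simp: principal_submat_def zero_pad_def\<close>)

lemma principal_submat_zero_pad_disjoint:
  assumes "off + k \<le> off' \<or> off' + k' \<le> off" "off + k \<le> n"
  shows "principal_submat off k (zero_pad n off' k' Y) = 0\<^sub>m k k"
  by (rule eq_matI) (use assms in \<open>auto simp: principal_submat_def zero_pad_def\<close>)

lemma mtrace_zero_pad: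
  assumes "off + k \<le> n" "Y \<in> carrier_mat k k"
  shows "mtrace (zero_pad n off k Y) = mtrace Y"
proof -
  obtain l where "n = off + (k + l)" using assms(1) by (metis le_add_diff_inverse add.assoc)
  then show ?thesis
    using assms(2) by (simp add: zero_pad_def mtrace_reindex_mat sum_lessThan_add mtrace_def)
qed

lemma mtrace_principal_submat_split:
  assumes "Y \<in> carrier_mat (r + s) (r + s)"
  shows "mtrace (principal_submat 0 r Y) + mtrace (principal_submat r s Y) = mtrace Y"
  using assms by (simp add: principal_submat_def mtrace_reindex_mat mtrace_def sum_lessThan_add)

section \<open>Maps on matrices and their lifts \<open>id\<^sub>k \<otimes> \<Phi>\<close>\<close>

definition mat_map :: "nat \<Rightarrow> nat \<Rightarrow> (complex mat \<Rightarrow> complex mat) \<Rightarrow> bool" where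
  "mat_map din dout \<Phi> \<longleftrightarrow> (\<forall>X \<in> carrier_mat din din. \<Phi> X \<in> carrier_mat dout dout)"

definition mat_linear :: "nat \<Rightarrow> (complex mat \<Rightarrow> complex mat) \<Rightarrow> bool" where
  "mat_linear d \<Phi> \<longleftrightarrow>
     (\<forall>X \<in> carrier_mat d d. \<forall>Y \<in> carrier_mat d d. \<Phi> (X + Y) = \<Phi> X + \<Phi> Y) \<and>
     (\<forall>c. \<forall>X \<in> carrier_mat d d. \<Phi> (c \<cdot>\<^sub>m X) = c \<cdot>\<^sub>m \<Phi> X)"

definition trace_preserving :: "nat \<Rightarrow> (complex mat \<Rightarrow> complex mat) \<Rightarrow> bool" where
  "trace_preserving d \<Phi> \<longleftrightarrow> (\<forall>X \<in> carrier_mat d d. mtrace (\<Phi> X) = mtrace X)"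

definition completely_positive :: "nat \<Rightarrow> nat \<Rightarrow> (complex mat \<Rightarrow> complex mat) \<Rightarrow> bool" where
  "completely_positive din dout \<Phi> \<longleftrightarrow>
     (\<forall>k X. psd (k * din) X \<longrightarrow> psd (k * dout) (lift_map k din dout \<Phi> X))"

lemma cptp_iff:
  "cptp din dout \<Phi> \<longleftrightarrow> mat_map din dout \<Phi> \<and> mat_linear din \<Phi> \<and> trace_preserving din \<Phi> \<and>
     completely_positive din dout \<Phi>"
  unfolding cptp_def mat_map_def mat_linear_def trace_preserving_def completely_positive_def by blast

lemma mat_mapD: "mat_map din dout \<Phi> \<Longrightarrow> X \<in> carrier_mat din din \<Longrightarrow> \<Phi> X \<in> carrier_mat dout dout"
  unfolding mat_map_def by blast

lemma mat_map_dims: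
  "mat_map din dout \<Phi> \<Longrightarrow> X \<in> carrier_mat din din \<Longrightarrow> dim_row (\<Phi> X) = dout"
  "mat_map din dout \<Phi> \<Longrightarrow> X \<in> carrier_mat din din \<Longrightarrow> dim_col (\<Phi> X) = dout"
  using mat_mapD by blast+

lemma mat_map_comp:
  "mat_map din dmid \<Psi> \<Longrightarrow> mat_map dmid dout \<Phi> \<Longrightarrow> mat_map din dout (\<lambda>X. \<Phi> (\<Psi> X))"
  unfolding mat_map_def by blast

lemma mat_linear_add:
  "mat_linear d \<Phi> \<Longrightarrow> X \<in> carrier_mat d d \<Longrightarrow> Y \<in> carrier_mat d d \<Longrightarrow> \<Phi> (X + Y) = \<Phi> X + \<Phi> Y"
  unfolding mat_linear_def by blast

lemma mat_linear_smult: "mat_linear d \<Phi> \<Longrightarrow> X \<in> carrier_mat d d \<Longrightarrow> \<Phi> (c \<cdot>\<^sub>m X) = c \<cdot>\<^sub>m \<Phi> X"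
  unfolding mat_linear_def by blast

lemma mat_linear_comp:
  "mat_map din dmid \<Psi> \<Longrightarrow> mat_linear din \<Psi> \<Longrightarrow> mat_linear dmid \<Phi> \<Longrightarrow> mat_linear din (\<lambda>X. \<Phi> (\<Psi> X))"
  unfolding mat_linear_def mat_map_def by simp

lemma mat_linear_fun_add:
  assumes "mat_map din dout \<Phi>" "mat_map din dout \<Psi>" "mat_linear din \<Phi>" "mat_linear din \<Psi>"
  shows "mat_linear din (\<lambda>X. \<Phi> X + \<Psi> X)"
  unfolding mat_linear_def
proof (intro conjI ballI allI)
  fix X Y :: "complex mat" assume "X \<in> carrier_mat din din" "Y \<in> carrier_mat din din"
  with assms show "\<Phi> (X + Y) + \<Psi> (X + Y) = \<Phi> X + \<Psi> X + (\<Phi> Y + \<Psi> Y)"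
    by (auto simp: mat_linear_add mat_mapD mat_map_dims intro!: eq_matI)
next
  fix c and X :: "complex mat" assume "X \<in> carrier_mat din din"
  with assms show "\<Phi> (c \<cdot>\<^sub>m X) + \<Psi> (c \<cdot>\<^sub>m X) = c \<cdot>\<^sub>m (\<Phi> X + \<Psi> X)"
    by (auto simp: mat_linear_smult mat_mapD mat_map_dims intro!: eq_matI simp: algebra_simps)
qed

lemma mat_linear_scalar: "mat_linear d (\<lambda>X. c \<cdot>\<^sub>m X)"
  unfolding mat_linear_def by (auto simp: add_smult_distrib_left_mat intro!: eq_matI)

lemma mat_map_reindex_mat [simp]: "mat_map d n (reindex_mat n c h)"
  unfolding mat_map_def by simp

lemma mat_linear_reindex_mat:
  assumes "\<And>a. a < n \<Longrightarrow> c a \<Longrightarrow> h a < d"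
  shows "mat_linear d (reindex_mat n c h)"
  unfolding mat_linear_def using assms by (auto intro!: eq_matI)

lemma mat_map_principal_submat [simp]: "mat_map n k (principal_submat off k)"
  and mat_map_zero_pad [simp]: "mat_map k n (zero_pad n off k)"
  unfolding principal_submat_def zero_pad_def by simp_all

lemma mat_linear_principal_submat: "off + k \<le> n \<Longrightarrow> mat_linear n (principal_submat off k)"
  and mat_linear_zero_pad: "mat_linear k (zero_pad n off k)"
  unfolding principal_submat_def zero_pad_def by (auto intro: mat_linear_reindex_mat)

lemma trace_preserving_zero_pad: "off + k \<le> n \<Longrightarrow> trace_preserving k (zero_pad n off k)"
  unfolding trace_preserving_def by (simp add: mtrace_zero_pad)

definition mat_block :: "nat \<Rightarrow> nat \<Rightarrow> nat \<Rightarrow> complex mat \<Rightarrow> complex mat" where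
  "mat_block d a b X = mat d d (\<lambda>(k,l). X $$ (a * d + k, b * d + l))"

lemma mat_block_carrier [simp]: "mat_block d a b X \<in> carrier_mat d d"
  and mat_block_dims [simp]: "dim_row (mat_block d a b X) = d" "dim_col (mat_block d a b X) = d"
  unfolding mat_block_def by simp_all

lemma mat_block_index [simp]:
  "k < d \<Longrightarrow> l < d \<Longrightarrow> mat_block d a b X $$ (k,l) = X $$ (a * d + k, b * d + l)"
  unfolding mat_block_def by simp

lemma mat_block_mat_block:
  assumes "a < m" "b < m"
  shows "mat_block d a b (mat_block (m * d) A B X) = mat_block d (A * m + a) (B * m + b) X"
    (is "?L = ?R")
proof (rule eq_matI)
  fix k l assume "k < dim_row ?R" "l < dim_col ?R"
  then have kl: "k < d" "l < d" by simp_all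
  then have "a * d + k < m * d" "b * d + l < m * d" using assms by (simp_all add: mult_add_less)
  then have "?L $$ (k, l) = X $$ (A * (m * d) + (a * d + k), B * (m * d) + (b * d + l))"
    using kl by simp
  also have "\<dots> = ?R $$ (k, l)"
    using kl by (simp add: algebra_simps)
  finally show "?L $$ (k, l) = ?R $$ (k, l)" .
qed simp_all

lemma mat_block_add:
  assumes "X \<in> carrier_mat (k * d) (k * d)" "Y \<in> carrier_mat (k * d) (k * d)" "a < k" "b < k"
  shows "mat_block d a b (X + Y) = mat_block d a b X + mat_block d a b Y"
  by (rule eq_matI) (use assms in \<open>simp_all add: mult_add_less\<close>)

lemma mat_block_smult:
  assumes "X \<in> carrier_mat (k * d) (k * d)" "a < k" "b < k"
  shows "mat_block d a b (c \<cdot>\<^sub>m X) = c \<cdot>\<^sub>m mat_block d a b X"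
  by (rule eq_matI) (use assms in \<open>simp_all add: mult_add_less\<close>)

lemma lift_map_eq:
  "lift_map k din dout \<Phi> X = mat (k * dout) (k * dout)
     (\<lambda>(i,j). \<Phi> (mat_block din (i div dout) (j div dout) X) $$ (i mod dout, j mod dout))"
  unfolding lift_map_def mat_block_def ..

lemma lift_map_carrier [simp]: "lift_map k din dout \<Phi> X \<in> carrier_mat (k * dout) (k * dout)"
  and lift_map_dims [simp]:
    "dim_row (lift_map k din dout \<Phi> X) = k * dout" "dim_col (lift_map k din dout \<Phi> X) = k * dout"
  unfolding lift_map_def by simp_all

lemma lift_map_index:
  "i < k * dout \<Longrightarrow> j < k * dout \<Longrightarrow>
   lift_map k din dout \<Phi> X $$ (i,j) = \<Phi> (mat_block din (i div dout) (j div dout) X) $$ (i mod dout, j mod dout)"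
  unfolding lift_map_eq by simp

lemma mat_map_lift_map [simp]: "mat_map (k * din) (k * dout) (lift_map k din dout \<Phi>)"
  unfolding mat_map_def by simp

lemma lift_map_cong:
  assumes "\<And>Y. Y \<in> carrier_mat din din \<Longrightarrow> \<Phi> Y = \<Psi> Y"
  shows "lift_map k din dout \<Phi> X = lift_map k din dout \<Psi> X"
  unfolding lift_map_eq by (simp add: assms)

lemma lift_map_id:
  assumes "X \<in> carrier_mat (k * d) (k * d)"
  shows "lift_map k d d (\<lambda>Y. Y) X = X"
  by (rule eq_matI) (use assms in \<open>auto simp: lift_map_index mod_less_of_less_mult\<close>)

lemma lift_map_scalar:
  assumes "X \<in> carrier_mat (k * d) (k * d)"
  shows "lift_map k d d (\<lambda>Y. c \<cdot>\<^sub>m Y) X = c \<cdot>\<^sub>m X"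
  by (rule eq_matI) (use assms in \<open>auto simp: lift_map_index mod_less_of_less_mult\<close>)

lemma lift_map_zero: "lift_map k din dout (\<lambda>_. 0\<^sub>m dout dout) X = 0\<^sub>m (k * dout) (k * dout)"
  by (rule eq_matI) (auto simp: lift_map_index mod_less_of_less_mult)

lemma mat_block_lift_map:
  assumes "mat_map din dout \<Psi>" "a < k" "b < k"
  shows "mat_block dout a b (lift_map k din dout \<Psi> X) = \<Psi> (mat_block din a b X)"
proof (rule eq_matI)
  fix u v assume "u < dim_row (\<Psi> (mat_block din a b X))" "v < dim_col (\<Psi> (mat_block din a b X))"
  then have "u < dout" "v < dout"
    using carrier_matD[OF mat_mapD[OF assms(1) mat_block_carrier]] by simp_all
  with assms(2,3)
  show "mat_block dout a b (lift_map k din dout \<Psi> X) $$ (u, v) = \<Psi> (mat_block din a b X) $$ (u, v)"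
    by (simp add: lift_map_index mult_add_less)
qed (use carrier_matD[OF mat_mapD[OF assms(1) mat_block_carrier]] in simp_all)

lemma lift_map_comp:
  assumes "mat_map din dmid \<Psi>"
  shows "lift_map k din dout (\<lambda>X. \<Phi> (\<Psi> X)) X = lift_map k dmid dout \<Phi> (lift_map k din dmid \<Psi> X)"
  by (rule eq_matI)
    (simp_all add: lift_map_index mat_block_lift_map[OF assms] less_mult_imp_div_less)

lemma lift_map_fun_add:
  assumes "mat_map din dout \<Phi>" "mat_map din dout \<Psi>"
  shows "lift_map k din dout (\<lambda>X. \<Phi> X + \<Psi> X) X = lift_map k din dout \<Phi> X + lift_map k din dout \<Psi> X"
  by (rule eq_matI)
    (use carrier_matD[OF mat_mapD[OF assms(1) mat_block_carrier]]
       carrier_matD[OF mat_mapD[OF assms(2) mat_block_carrier]]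
     in \<open>simp_all add: lift_map_index mod_less_of_less_mult\<close>)

lemma lift_map_lift_map:
  "lift_map p (m * din) (m * dout) (lift_map m din dout \<Phi>) X = lift_map (p * m) din dout \<Phi> X"
  (is "?L = ?R")
proof (rule eq_matI)
  fix i j assume "i < dim_row ?R" "j < dim_col ?R"
  then have i: "i < p * (m * dout)" and j: "j < p * (m * dout)" by (simp_all add: mult.assoc)
  have "i mod (m * dout) < m * dout" "j mod (m * dout) < m * dout"
    using mod_less_of_less_mult[OF i] mod_less_of_less_mult[OF j] by simp_all
  with i j have "?L $$ (i, j)
      = \<Phi> (mat_block din (i div (m * dout) * m + i mod (m * dout) div dout)
              (j div (m * dout) * m + j mod (m * dout) div dout) X) $$ (i mod dout, j mod dout)"
    by (simp add: lift_map_index mat_block_mat_block less_mult_imp_div_less mod_mult_mod)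
  also have "\<dots> = ?R $$ (i, j)"
    using i j by (simp add: lift_map_index div_mult_add_mod mult.assoc mod_mult_mod)
  finally show "?L $$ (i, j) = ?R $$ (i, j)" .
qed (simp_all add: mult.assoc)

lemma mat_linear_lift_map:
  assumes "mat_map din dout \<Phi>" "mat_linear din \<Phi>"
  shows "mat_linear (k * din) (lift_map k din dout \<Phi>)"
  unfolding mat_linear_def
proof (intro conjI ballI allI)
  fix X Y :: "complex mat"
  assume X: "X \<in> carrier_mat (k * din) (k * din)" and Y: "Y \<in> carrier_mat (k * din) (k * din)"
  show "lift_map k din dout \<Phi> (X + Y) = lift_map k din dout \<Phi> X + lift_map k din dout \<Phi> Y"
    (is "?L = ?R")
  proof (rule eq_matI)
    fix i j assume "i < dim_row ?R" "j < dim_col ?R"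
    with X Y assms show "?L $$ (i, j) = ?R $$ (i, j)"
      by (simp add: lift_map_index mat_block_add less_mult_imp_div_less mod_less_of_less_mult
          mat_linear_add mat_mapD mat_map_dims)
  qed simp_all
next
  fix c and X :: "complex mat" assume X: "X \<in> carrier_mat (k * din) (k * din)"
  show "lift_map k din dout \<Phi> (c \<cdot>\<^sub>m X) = c \<cdot>\<^sub>m lift_map k din dout \<Phi> X" (is "?L = ?R")
  proof (rule eq_matI)
    fix i j assume "i < dim_row ?R" "j < dim_col ?R"
    with X assms show "?L $$ (i, j) = ?R $$ (i, j)"
      by (simp add: lift_map_index mat_block_smult less_mult_imp_div_less mod_less_of_less_mult
          mat_linear_smult mat_mapD mat_map_dims)
  qed simp_all
qed

lemma lift_map_reindex_mat:
  assumes "\<And>a. a < dout \<Longrightarrow> c a \<Longrightarrow> h a < din"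
  shows "lift_map k din dout (reindex_mat dout c h) X
    = reindex_mat (k * dout) (\<lambda>i. c (i mod dout)) (\<lambda>i. i div dout * din + h (i mod dout)) X"
  by (rule eq_matI) (use assms in \<open>auto simp: lift_map_index mod_less_of_less_mult\<close>)

lemma lift_map_principal_submat_zero_pad:
  assumes "off + k \<le> n" "Y \<in> carrier_mat (m * k) (m * k)"
  shows "lift_map m n k (principal_submat off k) (lift_map m k n (zero_pad n off k) Y) = Y"
proof -
  have "lift_map m n k (principal_submat off k) (lift_map m k n (zero_pad n off k) Y)
      = lift_map m k k (\<lambda>Z. principal_submat off k (zero_pad n off k Z)) Y"
    by (rule lift_map_comp[OF mat_map_zero_pad, symmetric])
  also have "\<dots> = lift_map m k k (\<lambda>Z. Z) Y"
    using assms(1) by (intro lift_map_cong) (rule principal_submat_zero_pad)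
  finally show ?thesis using lift_map_id[OF assms(2)] by simp
qed

lemma lift_map_principal_submat_zero_pad_disjoint:
  assumes "off + k \<le> off' \<or> off' + k' \<le> off" "off + k \<le> n"
  shows "lift_map m n k (principal_submat off k) (lift_map m k' n (zero_pad n off' k') Y)
    = 0\<^sub>m (m * k) (m * k)"
proof -
  have "lift_map m n k (principal_submat off k) (lift_map m k' n (zero_pad n off' k') Y)
      = lift_map m k' k (\<lambda>Z. principal_submat off k (zero_pad n off' k' Z)) Y"
    by (rule lift_map_comp[OF mat_map_zero_pad, symmetric])
  also have "\<dots> = lift_map m k' k (\<lambda>_. 0\<^sub>m k k) Y"
    using assms by (intro lift_map_cong) (rule principal_submat_zero_pad_disjoint)
  finally show ?thesis by (simp add: lift_map_zero)
qed

section \<open>Traces, partial traces and complete positivity of lifted maps\<close>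

lemma mtrace_add: "A \<in> carrier_mat n n \<Longrightarrow> B \<in> carrier_mat n n \<Longrightarrow> mtrace (A + B) = mtrace A + mtrace B"
  unfolding mtrace_def by (simp add: sum.distrib)

lemma mtrace_smult: "A \<in> carrier_mat n n \<Longrightarrow> mtrace (c \<cdot>\<^sub>m A) = c * mtrace A"
  unfolding mtrace_def by (simp add: sum_distrib_left)

lemma mtrace_lift_map:
  assumes "mat_map din dout \<Phi>"
  shows "mtrace (lift_map m din dout \<Phi> X) = (\<Sum>e<m. mtrace (\<Phi> (mat_block din e e X)))"
proof -
  have "mtrace (lift_map m din dout \<Phi> X)
      = (\<Sum>e<m. \<Sum>a<dout. lift_map m din dout \<Phi> X $$ (a + e * dout, a + e * dout))"
    unfolding mtrace_def by (simp add: sum_mult_product)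
  also have "\<dots> = (\<Sum>e<m. \<Sum>a<dout. \<Phi> (mat_block din e e X) $$ (a, a))"
  proof (intro sum.cong refl)
    fix e a assume "e \<in> {..<m}" "a \<in> {..<dout}"
    then show "lift_map m din dout \<Phi> X $$ (a + e * dout, a + e * dout) = \<Phi> (mat_block din e e X) $$ (a, a)"
      using mult_add_less[of e m a dout] by (simp add: lift_map_index add.commute)
  qed
  also have "\<dots> = (\<Sum>e<m. mtrace (\<Phi> (mat_block din e e X)))"
    using assms by (simp add: mtrace_def mat_map_dims)
  finally show ?thesis .
qed

lemma mtrace_eq_sum_blocks:
  assumes "X \<in> carrier_mat (m * d) (m * d)"
  shows "mtrace X = (\<Sum>e<m. mtrace (mat_block d e e X))"
  using mtrace_lift_map[of d d "\<lambda>Y. Y" m X] lift_map_id[OF assms] by (simp add: mat_map_def)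

lemma trace_preserving_lift_map:
  assumes "mat_map din dout \<Phi>" "trace_preserving din \<Phi>"
  shows "trace_preserving (m * din) (lift_map m din dout \<Phi>)"
  unfolding trace_preserving_def
proof
  fix X :: "complex mat" assume "X \<in> carrier_mat (m * din) (m * din)"
  with assms show "mtrace (lift_map m din dout \<Phi> X) = mtrace X"
    by (simp add: mtrace_lift_map mtrace_eq_sum_blocks[of X m din] trace_preserving_def)
qed

lemma mtrace_lift_map_principal_submat_split:
  assumes "X \<in> carrier_mat (d * (p + q)) (d * (p + q))"
  shows "mtrace (lift_map d (p + q) p (principal_submat 0 p) X)
    + mtrace (lift_map d (p + q) q (principal_submat p q) X) = mtrace X"
  by (simp add: mtrace_lift_map mtrace_principal_submat_split mtrace_eq_sum_blocks[OF assms]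
      sum.distrib[symmetric])

lemma ptrace_add:
  assumes "A \<in> carrier_mat (M * k) (M * k)" "B \<in> carrier_mat (M * k) (M * k)"
  shows "ptrace M k (A + B) = ptrace M k A + ptrace M k B"
  by (rule eq_matI) (use assms in \<open>simp_all add: ptrace_def mult_add_less sum.distrib\<close>)

lemma ptrace_smult:
  assumes "A \<in> carrier_mat (M * k) (M * k)"
  shows "ptrace M k (c \<cdot>\<^sub>m A) = c \<cdot>\<^sub>m ptrace M k A"
  by (rule eq_matI) (use assms in \<open>simp_all add: ptrace_def mult_add_less sum_distrib_left\<close>)

lemma ptrace_lift_map:
  assumes "mat_map din dout \<Phi>" "trace_preserving din \<Phi>"
  shows "ptrace M (d * dout) (lift_map (M * d) din dout \<Phi> A) = ptrace M (d * din) A"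
    (is "?L = ?R")
proof (rule eq_matI)
  fix i j assume "i < dim_row ?R" "j < dim_col ?R"
  then have i: "i < M" and j: "j < M" by (simp_all add: ptrace_def)
  have ie: "i * d + e < M * d" "j * d + e < M * d" if "e < d" for e
    using mult_add_less[OF i that] mult_add_less[OF j that] .
  have "?L $$ (i, j)
      = (\<Sum>e<d. \<Sum>b<dout. lift_map (M * d) din dout \<Phi> A $$ ((i * d + e) * dout + b, (j * d + e) * dout + b))"
    using i j by (simp add: ptrace_def sum_mult_product algebra_simps)
  also have "\<dots> = (\<Sum>e<d. mtrace (\<Phi> (mat_block din (i * d + e) (j * d + e) A)))"
    using assms(1) by (simp add: mtrace_def lift_map_index mult_add_less ie mat_map_dims)
  also have "\<dots> = (\<Sum>e<d. mtrace (mat_block din (i * d + e) (j * d + e) A))"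
    using assms(2) by (simp add: trace_preserving_def)
  also have "\<dots> = ?R $$ (i, j)"
    using i j by (simp add: ptrace_def mtrace_def sum_mult_product algebra_simps)
  finally show "?L $$ (i, j) = ?R $$ (i, j)" .
qed (simp_all add: ptrace_def)

lemma completely_positive_lift_map:
  assumes "completely_positive din dout \<Phi>"
  shows "completely_positive (m * din) (m * dout) (lift_map m din dout \<Phi>)"
  unfolding completely_positive_def
proof (intro allI impI)
  fix k X assume "psd (k * (m * din)) X"
  then have "psd (k * m * din) X" by (simp add: mult.assoc)
  then have "psd (k * m * dout) (lift_map (k * m) din dout \<Phi> X)"
    using assms unfolding completely_positive_def by blast
  then show "psd (k * (m * dout)) (lift_map k (m * din) (m * dout) (lift_map m din dout \<Phi>) X)"
    by (simp add: lift_map_lift_map mult.assoc)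
qed

lemma completely_positive_comp:
  assumes "mat_map din dmid \<Psi>" "completely_positive din dmid \<Psi>" "completely_positive dmid dout \<Phi>"
  shows "completely_positive din dout (\<lambda>X. \<Phi> (\<Psi> X))"
  using assms unfolding completely_positive_def by (simp add: lift_map_comp)

lemma completely_positive_fun_add:
  assumes "mat_map din dout \<Phi>" "mat_map din dout \<Psi>"
    and "completely_positive din dout \<Phi>" "completely_positive din dout \<Psi>"
  shows "completely_positive din dout (\<lambda>X. \<Phi> X + \<Psi> X)"
  using assms unfolding completely_positive_def by (simp add: lift_map_fun_add psd_add)

lemma completely_positive_scalar:
  assumes "0 \<le> c" shows "completely_positive d d (\<lambda>X. complex_of_real c \<cdot>\<^sub>m X)"
  unfolding completely_positive_def
proof (intro allI impI)
  fix k X assume X: "psd (k * d) X"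
  then have "X \<in> carrier_mat (k * d) (k * d)" unfolding psd_def by simp
  with X assms show "psd (k * d) (lift_map k d d (\<lambda>X. complex_of_real c \<cdot>\<^sub>m X) X)"
    by (simp add: lift_map_scalar psd_smult)
qed

lemma completely_positive_reindex_mat:
  assumes h: "\<And>a. a < dout \<Longrightarrow> c a \<Longrightarrow> h a < din"
  shows "completely_positive din dout (reindex_mat dout c h)"
  unfolding completely_positive_def
proof (intro allI impI)
  fix k X assume X: "psd (k * din) X"
  have "i div dout * din + h (i mod dout) < k * din" if "i < k * dout" "c (i mod dout)" for i
    using that h by (simp add: mult_add_less less_mult_imp_div_less mod_less_of_less_mult)
  then have "psd (k * dout)
      (reindex_mat (k * dout) (\<lambda>i. c (i mod dout)) (\<lambda>i. i div dout * din + h (i mod dout)) X)"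
    by (rule psd_reindex_mat[OF X])
  then show "psd (k * dout) (lift_map k din dout (reindex_mat dout c h) X)"
    by (simp only: lift_map_reindex_mat[OF h])
qed

lemma completely_positive_principal_submat:
  "off + k \<le> n \<Longrightarrow> completely_positive n k (principal_submat off k)"
  and completely_positive_zero_pad: "completely_positive k n (zero_pad n off k)"
  unfolding principal_submat_def zero_pad_def by (auto intro: completely_positive_reindex_mat)

section \<open>Conjugation by \<open>1 \<otimes> W \<otimes> 1\<close>\<close>

lemma index_mult_mat_sum:
  "A \<in> carrier_mat n m \<Longrightarrow> B \<in> carrier_mat m k \<Longrightarrow> i < n \<Longrightarrow> j < k \<Longrightarrow>
   (A * B) $$ (i,j) = (\<Sum>l<m. A $$ (i,l) * B $$ (l,j))"
  by (simp add: scalar_prod_def atLeast0LessThan)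

lemma dagger_carrier: "A \<in> carrier_mat a b \<Longrightarrow> dagger A \<in> carrier_mat b a"
  unfolding dagger_def by simp

lemma dagger_index: "A \<in> carrier_mat a b \<Longrightarrow> i < b \<Longrightarrow> j < a \<Longrightarrow> dagger A $$ (i,j) = cnj (A $$ (j,i))"
  unfolding dagger_def by simp

lemma kron_dims [simp]:
  "dim_row (kron A B) = dim_row A * dim_row B" "dim_col (kron A B) = dim_col A * dim_col B"
  unfolding kron_def by simp_all

lemma kron_index:
  "i < dim_row A * dim_row B \<Longrightarrow> j < dim_col A * dim_col B \<Longrightarrow>
   kron A B $$ (i,j) = A $$ (i div dim_row B, j div dim_col B) * B $$ (i mod dim_row B, j mod dim_col B)"
  unfolding kron_def by simp

definition kron_mid :: "nat \<Rightarrow> complex mat \<Rightarrow> nat \<Rightarrow> complex mat" where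
  "kron_mid p W q = kron (kron (1\<^sub>m p) W) (1\<^sub>m q)"

definition conj_mid :: "nat \<Rightarrow> complex mat \<Rightarrow> nat \<Rightarrow> complex mat \<Rightarrow> complex mat" where
  "conj_mid p W q X = kron_mid p W q * X * dagger (kron_mid p W q)"

lemma kron_mid_carrier:
  "W \<in> carrier_mat dO dI \<Longrightarrow> kron_mid p W q \<in> carrier_mat (p * dO * q) (p * dI * q)"
  unfolding kron_mid_def carrier_mat_def by simp

lemma conj_mid_carrier:
  "W \<in> carrier_mat dO dI \<Longrightarrow> conj_mid p W q X \<in> carrier_mat (p * dO * q) (p * dO * q)"
  unfolding conj_mid_def kron_mid_def carrier_mat_def dagger_def by simp

lemma kron_mid_index:
  assumes W: "W \<in> carrier_mat dO dI" and I: "I < p * dO * q" and a: "a < p * dI * q"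
  shows "kron_mid p W q $$ (I,a) = (if I div q div dO = a div q div dI then 1 else 0)
    * W $$ (I div q mod dO, a div q mod dI) * (if I mod q = a mod q then 1 else 0)"
  using div_mod_less_of_less_mult[OF I] div_mod_less_of_less_mult[OF a] W I a
  unfolding kron_mid_def by (simp add: kron_index)

lemma kron_mid_row_sum:
  assumes W: "W \<in> carrier_mat dO dI" and I: "I < p * dO * q"
  shows "(\<Sum>a<p * dI * q. kron_mid p W q $$ (I,a) * f a)
    = (\<Sum>x<dI. W $$ (I div q mod dO, x) * f (I mod q + (x + I div q div dO * dI) * q))"
proof -
  note bounds = div_mod_less_of_less_mult[OF I]
  let ?w = "\<lambda>v. W $$ (I div q mod dO, v mod dI)"
  have "(\<Sum>a<p * dI * q. kron_mid p W q $$ (I,a) * f a)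
      = (\<Sum>v<p * dI. \<Sum>l<q. kron_mid p W q $$ (I, l + v * q) * f (l + v * q))"
    by (simp add: sum_mult_product)
  also have "\<dots> = (\<Sum>v<p * dI. \<Sum>l<q.
      if l = I mod q then (if I div q div dO = v div dI then 1 else 0) * ?w v * f (l + v * q) else 0)"
  proof (intro sum.cong refl)
    fix v l assume "v \<in> {..<p * dI}" and l: "l \<in> {..<q}"
    then have "l + v * q < p * dI * q" using mult_add_less[of v "p * dI" l q] by (simp add: add.commute)
    with l show "kron_mid p W q $$ (I, l + v * q) * f (l + v * q) =
      (if l = I mod q then (if I div q div dO = v div dI then 1 else 0) * ?w v * f (l + v * q) else 0)"
      by (simp add: kron_mid_index[OF W I])
  qed
  also have "\<dots> = (\<Sum>v<p * dI. (if I div q div dO = v div dI then 1 else 0) * ?w v * f (I mod q + v * q))"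
    using bounds by simp
  also have "\<dots> = (\<Sum>u<p. \<Sum>x<dI.
      (if I div q div dO = u then 1 else 0) * W $$ (I div q mod dO, x) * f (I mod q + (x + u * dI) * q))"
    by (simp add: sum_mult_product)
  also have "\<dots> = (\<Sum>u<p. if u = I div q div dO
      then (\<Sum>x<dI. W $$ (I div q mod dO, x) * f (I mod q + (x + u * dI) * q)) else 0)"
    by (intro sum.cong refl) auto
  also have "\<dots> = (\<Sum>x<dI. W $$ (I div q mod dO, x) * f (I mod q + (x + I div q div dO * dI) * q))"
    using bounds by simp
  finally show ?thesis .
qed

lemma conj_mid_index:
  assumes W: "W \<in> carrier_mat dO dI" and Y: "Y \<in> carrier_mat (p * dI * q) (p * dI * q)"
    and I: "I < p * dO * q" and J: "J < p * dO * q"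
  shows "conj_mid p W q Y $$ (I,J) =
    (\<Sum>y<dI. cnj (W $$ (J div q mod dO, y)) * (\<Sum>x<dI. W $$ (I div q mod dO, x) *
        Y $$ (I mod q + (x + I div q div dO * dI) * q, J mod q + (y + J div q div dO * dI) * q)))"
proof -
  let ?K = "kron_mid p W q"
  have K: "?K \<in> carrier_mat (p * dO * q) (p * dI * q)" using kron_mid_carrier[OF W] .
  have KY: "?K * Y \<in> carrier_mat (p * dO * q) (p * dI * q)" using K Y by simp
  define g where
    "g b = (\<Sum>x<dI. W $$ (I div q mod dO, x) * Y $$ (I mod q + (x + I div q div dO * dI) * q, b))" for b
  have "conj_mid p W q Y $$ (I,J) = (\<Sum>b<p * dI * q. (?K * Y) $$ (I,b) * dagger ?K $$ (b,J))"
    unfolding conj_mid_def using index_mult_mat_sum[OF KY dagger_carrier[OF K] I J] .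
  also have "\<dots> = (\<Sum>b<p * dI * q. cnj (?K $$ (J,b)) * g b)"
  proof (intro sum.cong refl)
    fix b assume b: "b \<in> {..<p * dI * q}"
    have "(?K * Y) $$ (I,b) = (\<Sum>a<p * dI * q. ?K $$ (I,a) * Y $$ (a,b))"
      using index_mult_mat_sum[OF K Y I] b by simp
    also have "\<dots> = g b" unfolding g_def by (rule kron_mid_row_sum[OF W I])
    finally show "(?K * Y) $$ (I,b) * dagger ?K $$ (b,J) = cnj (?K $$ (J,b)) * g b"
      using dagger_index[OF K] b J by simp
  qed
  also have "\<dots> = cnj (\<Sum>b<p * dI * q. ?K $$ (J,b) * cnj (g b))"
    by simp
  also have "\<dots> = cnj (\<Sum>y<dI. W $$ (J div q mod dO, y) * cnj (g (J mod q + (y + J div q div dO * dI) * q)))"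
    using kron_mid_row_sum[OF W J, of "\<lambda>b. cnj (g b)"] by simp
  also have "\<dots> = (\<Sum>y<dI. cnj (W $$ (J div q mod dO, y)) * g (J mod q + (y + J div q div dO * dI) * q))"
    by simp
  finally show ?thesis unfolding g_def .
qed

lemma conj_mid_add:
  assumes "W \<in> carrier_mat dO dI"
    and "A \<in> carrier_mat (p * dI * q) (p * dI * q)" "B \<in> carrier_mat (p * dI * q) (p * dI * q)"
  shows "conj_mid p W q (A + B) = conj_mid p W q A + conj_mid p W q B"
proof -
  have K: "kron_mid p W q \<in> carrier_mat (p * dO * q) (p * dI * q)" using kron_mid_carrier[OF assms(1)] .
  then show ?thesis
    unfolding conj_mid_def using assms(2,3) dagger_carrier[OF K]
    by (simp add: mult_add_distrib_mat add_mult_distrib_mat[of _ "p * dO * q" "p * dI * q"])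
qed

lemma conj_mid_smult:
  assumes "W \<in> carrier_mat dO dI" "A \<in> carrier_mat (p * dI * q) (p * dI * q)"
  shows "conj_mid p W q (c \<cdot>\<^sub>m A) = c \<cdot>\<^sub>m conj_mid p W q A"
proof -
  have K: "kron_mid p W q \<in> carrier_mat (p * dO * q) (p * dI * q)" using kron_mid_carrier[OF assms(1)] .
  then show ?thesis
    unfolding conj_mid_def using assms(2) dagger_carrier[OF K]
    by (simp add: mult_smult_distrib mult_smult_assoc_mat[of _ "p * dO * q" "p * dI * q"])
qed

lemma conj_mid_lift_reindex_mat:
  assumes W: "W \<in> carrier_mat dO dI" and Y: "Y \<in> carrier_mat (p * dI * k) (p * dI * k)"
    and h: "\<And>a. a < n \<Longrightarrow> c a \<Longrightarrow> h a < k"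
  shows "conj_mid p W n (lift_map (p * dI) k n (reindex_mat n c h) Y)
    = lift_map (p * dO) k n (reindex_mat n c h) (conj_mid p W k Y)" (is "?L = ?R")
proof (rule eq_matI)
  fix I J assume "I < dim_row ?R" "J < dim_col ?R"
  then have I: "I < p * dO * n" and J: "J < p * dO * n" by simp_all
  note bI = div_mod_less_of_less_mult[OF I] and bJ = div_mod_less_of_less_mult[OF J]
  have divI: "(I mod n + z * n) div n = z" and divJ: "(J mod n + z * n) div n = z" for z
    using bI(3) bJ(3) by simp_all
  let ?c = "c (I mod n) \<and> c (J mod n)"
  let ?Y = "\<lambda>x y. Y $$ ((x + I div n div dO * dI) * k + h (I mod n), (y + J div n div dO * dI) * k + h (J mod n))"
  have "?L $$ (I, J) = (\<Sum>y<dI. cnj (W $$ (J div n mod dO, y)) *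
      (\<Sum>x<dI. W $$ (I div n mod dO, x) * (if ?c then ?Y x y else 0)))"
    unfolding conj_mid_index[OF W lift_map_carrier I J]
    by (intro sum.cong refl arg_cong2[where f = "(*)"])
      (simp add: lift_map_reindex_mat[OF h] mult_add_less3 bI bJ divI divJ)
  also have "\<dots> = ?R $$ (I, J)"
  proof (cases ?c)
    case True
    with h bI bJ have hI: "h (I mod n) < k" and hJ: "h (J mod n) < k"
      and I': "I div n * k + h (I mod n) < p * dO * k" and J': "J div n * k + h (J mod n) < p * dO * k"
      by (simp_all add: mult_add_less)
    have "?R $$ (I, J) = conj_mid p W k Y $$ (I div n * k + h (I mod n), J div n * k + h (J mod n))"
      using True I J by (simp add: lift_map_reindex_mat[OF h])
    also have "\<dots> = (\<Sum>y<dI. cnj (W $$ (J div n mod dO, y)) * (\<Sum>x<dI. W $$ (I div n mod dO, x) *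
        Y $$ (h (I mod n) + (x + I div n div dO * dI) * k, h (J mod n) + (y + J div n div dO * dI) * k)))"
      using hI hJ by (simp add: conj_mid_index[OF W Y I' J'])
    finally show ?thesis using True by (simp add: add.commute)
  next
    case False
    show ?thesis using I J by (simp add: lift_map_reindex_mat[OF h] if_not_P[OF False])
  qed
  finally show "?L $$ (I, J) = ?R $$ (I, J)" .
qed (use carrier_matD[OF conj_mid_carrier[OF W]] in simp_all)

lemma conj_mid_lift_zero_pad:
  assumes "W \<in> carrier_mat dO dI" "Y \<in> carrier_mat (p * dI * k) (p * dI * k)"
  shows "conj_mid p W n (lift_map (p * dI) k n (zero_pad n off k) Y)
    = lift_map (p * dO) k n (zero_pad n off k) (conj_mid p W k Y)"
  unfolding zero_pad_def by (rule conj_mid_lift_reindex_mat[OF assms]) auto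

section \<open>Direct sums of operators and of channels\<close>

text \<open>The block-diagonal operator \<open>A \<oplus> B\<close> on \<open>\<complex>\<^sup>m \<otimes> (\<complex>\<^sup>r \<oplus> \<complex>\<^sup>s)\<close>.\<close>
definition direct_sum :: "nat \<Rightarrow> nat \<Rightarrow> nat \<Rightarrow> complex mat \<Rightarrow> complex mat \<Rightarrow> complex mat" where
  "direct_sum m r s A B =
     lift_map m r (r + s) (zero_pad (r + s) 0 r) A + lift_map m s (r + s) (zero_pad (r + s) r s) B"

lemma direct_sum_carrier [simp]: "direct_sum m r s A B \<in> carrier_mat (m * (r + s)) (m * (r + s))"
  unfolding direct_sum_def by simp

lemma lift_map_principal_submat_direct_sum:
  assumes A: "A \<in> carrier_mat (m * r) (m * r)" and B: "B \<in> carrier_mat (m * s) (m * s)"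
  shows "lift_map m (r + s) r (principal_submat 0 r) (direct_sum m r s A B) = A"
    and "lift_map m (r + s) s (principal_submat r s) (direct_sum m r s A B) = B"
proof -
  have lin: "mat_linear (m * (r + s)) (lift_map m (r + s) k (principal_submat off k))"
    if "off + k \<le> r + s" for off k
    using that by (intro mat_linear_lift_map) (simp_all add: mat_linear_principal_submat)
  show "lift_map m (r + s) r (principal_submat 0 r) (direct_sum m r s A B) = A"
    unfolding direct_sum_def using A
    by (simp add: mat_linear_add[OF lin] lift_map_principal_submat_zero_pad
        lift_map_principal_submat_zero_pad_disjoint)
  show "lift_map m (r + s) s (principal_submat r s) (direct_sum m r s A B) = B"
    unfolding direct_sum_def using B
    by (simp add: mat_linear_add[OF lin] lift_map_principal_submat_zero_pad
        lift_map_principal_submat_zero_pad_disjoint)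
qed

lemma ptrace_direct_sum:
  assumes "A \<in> carrier_mat (M * d * r) (M * d * r)" "B \<in> carrier_mat (M * d * s) (M * d * s)"
  shows "ptrace M (d * (r + s)) (direct_sum (M * d) r s A B) = ptrace M (d * r) A + ptrace M (d * s) B"
proof -
  have carrier: "lift_map (M * d) k (r + s) \<Phi> Z \<in> carrier_mat (M * (d * (r + s))) (M * (d * (r + s)))"
    for k \<Phi> Z
    using lift_map_carrier[of "M * d" k "r + s" \<Phi> Z] by (simp add: mult.assoc)
  show ?thesis
    unfolding direct_sum_def ptrace_add[OF carrier carrier]
    by (simp add: ptrace_lift_map trace_preserving_zero_pad)
qed

lemma conj_mid_direct_sum:
  assumes W: "W \<in> carrier_mat dO dI"
    and "A \<in> carrier_mat (p * dI * r) (p * dI * r)" "B \<in> carrier_mat (p * dI * s) (p * dI * s)"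
  shows "conj_mid p W (r + s) (direct_sum (p * dI) r s A B)
    = direct_sum (p * dO) r s (conj_mid p W r A) (conj_mid p W s B)"
  unfolding direct_sum_def conj_mid_add[OF W lift_map_carrier lift_map_carrier]
  using assms by (simp add: conj_mid_lift_zero_pad)

definition direct_sum_channel ::
  "nat \<Rightarrow> nat \<Rightarrow> nat \<Rightarrow> (complex mat \<Rightarrow> complex mat) \<Rightarrow> (complex mat \<Rightarrow> complex mat)
    \<Rightarrow> (complex mat \<Rightarrow> complex mat) \<Rightarrow> (complex mat \<Rightarrow> complex mat) \<Rightarrow> complex mat \<Rightarrow> complex mat" where
  "direct_sum_channel d r s Q0 Q1 P0 P1 X = direct_sum d r s (P0 (Q0 X)) (P1 (Q1 X))"

lemma padded_branch:
  assumes P: "cptp dmid (dA * k) P"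
    and Q: "mat_map din dmid Q" "mat_linear din Q" "completely_positive din dmid Q"
    and "off + k \<le> n"
  defines "F \<equiv> \<lambda>X. lift_map dA k n (zero_pad n off k) (P (Q X))"
  shows "mat_map din (dA * n) F" "mat_linear din F" "completely_positive din (dA * n) F"
    and "\<And>X. X \<in> carrier_mat din din \<Longrightarrow> mtrace (F X) = mtrace (Q X)"
proof -
  have P': "mat_map dmid (dA * k) P" "mat_linear dmid P" "trace_preserving dmid P"
    "completely_positive dmid (dA * k) P"
    using P by (simp_all add: cptp_iff)
  have PQ: "mat_map din (dA * k) (\<lambda>X. P (Q X))" by (rule mat_map_comp[OF Q(1) P'(1)])
  show "mat_map din (dA * n) F"
    unfolding F_def by (rule mat_map_comp[OF PQ mat_map_lift_map])
  show "mat_linear din F"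
    unfolding F_def
    by (rule mat_linear_comp[OF PQ mat_linear_comp[OF Q(1,2) P'(2)]
        mat_linear_lift_map[OF mat_map_zero_pad mat_linear_zero_pad]])
  show "completely_positive din (dA * n) F"
    unfolding F_def
    by (rule completely_positive_comp[OF PQ completely_positive_comp[OF Q(1,3) P'(4)]
        completely_positive_lift_map[OF completely_positive_zero_pad]])
  fix X :: "complex mat" assume "X \<in> carrier_mat din din"
  then show "mtrace (F X) = mtrace (Q X)"
    using trace_preserving_lift_map[OF mat_map_zero_pad trace_preserving_zero_pad[OF \<open>off + k \<le> n\<close>]]
      P'(3) mat_mapD[OF PQ] mat_mapD[OF Q(1)]
    unfolding F_def trace_preserving_def by simp
qed

lemma cptp_direct_sum_channel:
  assumes P0: "cptp d0 (dA * r) P0" and P1: "cptp d1 (dA * s) P1"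
    and Q0: "mat_map din d0 Q0" "mat_linear din Q0" "completely_positive din d0 Q0"
    and Q1: "mat_map din d1 Q1" "mat_linear din Q1" "completely_positive din d1 Q1"
    and tr: "\<And>X. X \<in> carrier_mat din din \<Longrightarrow> mtrace (Q0 X) + mtrace (Q1 X) = mtrace X"
  shows "cptp din (dA * (r + s)) (direct_sum_channel dA r s Q0 Q1 P0 P1)"
proof -
  note B0 = padded_branch[OF P0 Q0, of 0 "r + s", simplified]
  note B1 = padded_branch[OF P1 Q1, of r "r + s", simplified]
  have eq: "direct_sum_channel dA r s Q0 Q1 P0 P1
      = (\<lambda>X. lift_map dA r (r + s) (zero_pad (r + s) 0 r) (P0 (Q0 X))
           + lift_map dA s (r + s) (zero_pad (r + s) r s) (P1 (Q1 X)))"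
    by (simp add: fun_eq_iff direct_sum_channel_def direct_sum_def)
  have "mtrace (direct_sum_channel dA r s Q0 Q1 P0 P1 X) = mtrace X" if "X \<in> carrier_mat din din" for X
    using that B0(4) B1(4) tr unfolding eq by (simp add: mtrace_add[OF lift_map_carrier lift_map_carrier])
  then have "trace_preserving din (direct_sum_channel dA r s Q0 Q1 P0 P1)"
    unfolding trace_preserving_def by blast
  moreover have "mat_map din (dA * (r + s)) (direct_sum_channel dA r s Q0 Q1 P0 P1)"
    unfolding mat_map_def direct_sum_channel_def by (simp add: mult.commute)
  ultimately show ?thesis
    unfolding cptp_iff eq
    using B0 B1 by (simp add: mat_linear_fun_add completely_positive_fun_add)
qed

lemma cptp_direct_sum_channel_weighted:
  assumes "cptp d (dA * r) P0" "cptp d (dA * s) P1" "0 \<le> t" "t \<le> 1"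
  shows "cptp d (dA * (r + s))
    (direct_sum_channel dA r s (\<lambda>X. complex_of_real t \<cdot>\<^sub>m X) (\<lambda>X. complex_of_real (1 - t) \<cdot>\<^sub>m X) P0 P1)"
proof (rule cptp_direct_sum_channel[OF assms(1,2)])
  show "completely_positive d d (\<lambda>X. complex_of_real t \<cdot>\<^sub>m X)"
    using assms(3) by (rule completely_positive_scalar)
  show "completely_positive d d (\<lambda>X. complex_of_real (1 - t) \<cdot>\<^sub>m X)"
    by (rule completely_positive_scalar) (use assms(4) in simp)
  fix X :: "complex mat" assume "X \<in> carrier_mat d d"
  then show "mtrace (complex_of_real t \<cdot>\<^sub>m X) + mtrace (complex_of_real (1 - t) \<cdot>\<^sub>m X) = mtrace X"
    by (simp add: mtrace_smult algebra_simps)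
qed (simp_all add: mat_map_def mat_linear_scalar)

lemma cptp_direct_sum_channel_blockwise:
  assumes "cptp (d * p) (dA * r) P0" "cptp (d * q) (dA * s) P1"
  shows "cptp (d * (p + q)) (dA * (r + s)) (direct_sum_channel dA r s
    (lift_map d (p + q) p (principal_submat 0 p)) (lift_map d (p + q) q (principal_submat p q)) P0 P1)"
  by (rule cptp_direct_sum_channel[OF assms])
    (simp_all add: mat_linear_lift_map mat_linear_principal_submat completely_positive_lift_map
      completely_positive_principal_submat mtrace_lift_map_principal_submat_split)

lemma lift_map_direct_sum_channel:
  assumes Q: "mat_map din d0 Q0" "mat_map din d1 Q1"
    and P: "mat_map d0 (dA * r) P0" "mat_map d1 (dA * s) P1"
  shows "lift_map p din (dA * (r + s)) (direct_sum_channel dA r s Q0 Q1 P0 P1) X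
    = direct_sum (p * dA) r s (lift_map p d0 (dA * r) P0 (lift_map p din d0 Q0 X))
        (lift_map p d1 (dA * s) P1 (lift_map p din d1 Q1 X))"
proof -
  have branch: "lift_map p din (dA * (r + s))
        (\<lambda>X. lift_map dA k (r + s) (zero_pad (r + s) off k) (P (Q X))) X
      = lift_map (p * dA) k (r + s) (zero_pad (r + s) off k)
          (lift_map p dmid (dA * k) P (lift_map p din dmid Q X))"
    if "mat_map din dmid Q" "mat_map dmid (dA * k) P" for k off dmid P Q
    unfolding lift_map_comp[OF mat_map_comp[OF that], of p "dA * (r + s)"
        "lift_map dA k (r + s) (zero_pad (r + s) off k)" X]
      lift_map_comp[OF that(1), of p "dA * k" P X]
    by (rule lift_map_lift_map)
  have eq: "direct_sum_channel dA r s Q0 Q1 P0 P1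
      = (\<lambda>X. lift_map dA r (r + s) (zero_pad (r + s) 0 r) (P0 (Q0 X))
           + lift_map dA s (r + s) (zero_pad (r + s) r s) (P1 (Q1 X)))"
    by (simp add: fun_eq_iff direct_sum_channel_def direct_sum_def)
  have maps: "mat_map din (dA * (r + s)) (\<lambda>X. lift_map dA k (r + s) (zero_pad (r + s) off k) (F X))"
    for k off F
    unfolding mat_map_def by simp
  show ?thesis
    unfolding eq lift_map_fun_add[OF maps maps] direct_sum_def branch[OF Q(1) P(1)] branch[OF Q(2) P(2)] ..
qed

lemma conj_mid_lift_direct_sum_channel:
  assumes W: "W \<in> carrier_mat dO dA"
    and P0: "cptp d0 (dA * r) P0" and P1: "cptp d1 (dA * s) P1"
    and Q: "mat_map din d0 Q0" "mat_map din d1 Q1"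
    and S: "S0 \<in> carrier_mat (p * d0) (p * d0)" "S1 \<in> carrier_mat (p * d1) (p * d1)"
    and select: "lift_map p din d0 Q0 X = c0 \<cdot>\<^sub>m S0" "lift_map p din d1 Q1 X = c1 \<cdot>\<^sub>m S1"
  shows "conj_mid p W (r + s) (lift_map p din (dA * (r + s)) (direct_sum_channel dA r s Q0 Q1 P0 P1) X)
    = direct_sum (p * dO) r s (c0 \<cdot>\<^sub>m conj_mid p W r (lift_map p d0 (dA * r) P0 S0))
        (c1 \<cdot>\<^sub>m conj_mid p W s (lift_map p d1 (dA * s) P1 S1))"
proof -
  have mP: "mat_map d0 (dA * r) P0" "mat_map d1 (dA * s) P1"
    and lP: "mat_linear d0 P0" "mat_linear d1 P1"
    using P0 P1 by (simp_all add: cptp_iff)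
  have lin: "lift_map p d0 (dA * r) P0 (c0 \<cdot>\<^sub>m S0) = c0 \<cdot>\<^sub>m lift_map p d0 (dA * r) P0 S0"
    "lift_map p d1 (dA * s) P1 (c1 \<cdot>\<^sub>m S1) = c1 \<cdot>\<^sub>m lift_map p d1 (dA * s) P1 S1"
    using mat_linear_smult[OF mat_linear_lift_map[OF mP(1) lP(1)] S(1)]
      mat_linear_smult[OF mat_linear_lift_map[OF mP(2) lP(2)] S(2)] .
  have carrier: "lift_map p dmid (dA * k) P Z \<in> carrier_mat (p * dA * k) (p * dA * k)" for dmid k P Z
    using lift_map_carrier[of p dmid "dA * k" P Z] by (simp add: mult.assoc)
  show ?thesis
    unfolding lift_map_direct_sum_channel[OF Q mP] select lin
    by (simp add: conj_mid_direct_sum[OF W] carrier conj_mid_smult[OF W])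
qed

section \<open>Mixing two protocols\<close>

definition valid_protocol ::
  "nat \<Rightarrow> nat \<Rightarrow> nat \<Rightarrow> (nat \<Rightarrow> nat) \<Rightarrow> (nat \<Rightarrow> complex mat \<Rightarrow> complex mat) \<Rightarrow> bool" where
  "valid_protocol dA dE n r P \<longleftrightarrow>
     (\<forall>i. 1 \<le> i \<and> i \<le> n \<longrightarrow> 0 < r i \<and> cptp (reg_dim dE r (i - 1)) (dA * r i) (P i))"

lemma seq_set_eq: "seq_set dA dB dE W n = {seq_output dA dB dE W r P n | r P. valid_protocol dA dE n r P}"
  unfolding seq_set_def valid_protocol_def ..

lemma seq_state_Suc_conj_mid:
  "seq_state dA dB dE W r P (Suc i) = conj_mid (dB ^ i) W (r (Suc i))
     (lift_map (dB ^ i) (reg_dim dE r i) (dA * r (Suc i)) (P (Suc i)) (seq_state dA dB dE W r P i))"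
  by (simp add: conj_mid_def kron_mid_def Let_def)

lemma seq_state_carrier:
  assumes "W \<in> carrier_mat (dB * dE) dA"
  shows "seq_state dA dB dE W r P i \<in> carrier_mat (dB ^ i * reg_dim dE r i) (dB ^ i * reg_dim dE r i)"
proof (cases i)
  case 0 then show ?thesis by (simp add: reg_dim_def)
next
  case (Suc j)
  have dims: "dB ^ j * (dB * dE) * r (Suc j) = dB ^ Suc j * reg_dim dE r (Suc j)"
    by (simp add: reg_dim_def ac_simps)
  show ?thesis
    unfolding Suc seq_state_Suc_conj_mid
    using conj_mid_carrier[OF assms, of "dB ^ j" "r (Suc j)"] unfolding dims .
qed

text \<open>
  The input splitting of round \<open>i + 1\<close> of the mixed protocol: the trivial input of round 1 is
  weighted by \<open>t\<close> and \<open>1 - t\<close>, later inputs \<open>E\<^sub>i (R\<^sub>i \<oplus> R'\<^sub>i)\<close> are cut down to \<open>E\<^sub>i R\<^sub>i\<close> and \<open>E\<^sub>i R'\<^sub>i\<close>.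
\<close>
definition mix_split_fst :: "nat \<Rightarrow> real \<Rightarrow> (nat \<Rightarrow> nat) \<Rightarrow> (nat \<Rightarrow> nat) \<Rightarrow> nat \<Rightarrow> complex mat \<Rightarrow> complex mat" where
  "mix_split_fst dE t r r' i = (if i = 0 then (\<lambda>X. complex_of_real t \<cdot>\<^sub>m X)
     else lift_map dE (r i + r' i) (r i) (principal_submat 0 (r i)))"

definition mix_split_snd :: "nat \<Rightarrow> real \<Rightarrow> (nat \<Rightarrow> nat) \<Rightarrow> (nat \<Rightarrow> nat) \<Rightarrow> nat \<Rightarrow> complex mat \<Rightarrow> complex mat" where
  "mix_split_snd dE t r r' i = (if i = 0 then (\<lambda>X. complex_of_real (1 - t) \<cdot>\<^sub>m X)
     else lift_map dE (r i + r' i) (r' i) (principal_submat (r i) (r' i)))"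

definition mixed_channel :: "nat \<Rightarrow> nat \<Rightarrow> real \<Rightarrow> (nat \<Rightarrow> nat) \<Rightarrow> (nat \<Rightarrow> complex mat \<Rightarrow> complex mat)
    \<Rightarrow> (nat \<Rightarrow> nat) \<Rightarrow> (nat \<Rightarrow> complex mat \<Rightarrow> complex mat) \<Rightarrow> nat \<Rightarrow> complex mat \<Rightarrow> complex mat" where
  "mixed_channel dA dE t r P r' P' i = direct_sum_channel dA (r i) (r' i)
     (mix_split_fst dE t r r' (i - 1)) (mix_split_snd dE t r r' (i - 1)) (P i) (P' i)"

lemma mixed_channel_Suc:
  "mixed_channel dA dE t r P r' P' (Suc i) = direct_sum_channel dA (r (Suc i)) (r' (Suc i))
     (mix_split_fst dE t r r' i) (mix_split_snd dE t r r' i) (P (Suc i)) (P' (Suc i))"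
  unfolding mixed_channel_def by simp

lemma mat_map_mix_split:
  "mat_map (reg_dim dE (\<lambda>i. r i + r' i) i) (reg_dim dE r i) (mix_split_fst dE t r r' i)"
  "mat_map (reg_dim dE (\<lambda>i. r i + r' i) i) (reg_dim dE r' i) (mix_split_snd dE t r r' i)"
  by (simp_all add: mat_map_def reg_dim_def mix_split_fst_def mix_split_snd_def)

lemma lift_map_mix_split_direct_sum:
  assumes "0 < i"
    and "A \<in> carrier_mat (p * dE * r i) (p * dE * r i)" "B \<in> carrier_mat (p * dE * r' i) (p * dE * r' i)"
  shows "lift_map p (dE * (r i + r' i)) (dE * r i) (mix_split_fst dE t r r' i)
      (direct_sum (p * dE) (r i) (r' i) A B) = A"
    and "lift_map p (dE * (r i + r' i)) (dE * r' i) (mix_split_snd dE t r r' i)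
      (direct_sum (p * dE) (r i) (r' i) A B) = B"
  using assms lift_map_principal_submat_direct_sum
  by (simp_all add: mix_split_fst_def mix_split_snd_def lift_map_lift_map)

lemma valid_protocol_mix:
  assumes "valid_protocol dA dE n r P" "valid_protocol dA dE n r' P'" "0 \<le> t" "t \<le> 1"
  shows "valid_protocol dA dE n (\<lambda>i. r i + r' i) (mixed_channel dA dE t r P r' P')"
  unfolding valid_protocol_def
proof (intro allI impI conjI)
  fix i assume i: "1 \<le> i \<and> i \<le> n"
  then have "0 < r i" and P: "cptp (reg_dim dE r (i - 1)) (dA * r i) (P i)"
    and P': "cptp (reg_dim dE r' (i - 1)) (dA * r' i) (P' i)"
    using assms(1,2) unfolding valid_protocol_def by auto
  then show "0 < r i + r' i" by simp
  show "cptp (reg_dim dE (\<lambda>i. r i + r' i) (i - 1)) (dA * (r i + r' i)) (mixed_channel dA dE t r P r' P' i)"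
  proof (cases "i = 1")
    case True
    then show ?thesis
      using cptp_direct_sum_channel_weighted[of 1 dA "r i" "P i" "r' i" "P' i" t] P P' assms(3,4)
      by (simp add: mixed_channel_def mix_split_fst_def mix_split_snd_def reg_dim_def)
  next
    case False
    then show ?thesis
      using cptp_direct_sum_channel_blockwise[of dE "r (i - 1)" dA "r i" "P i" "r' (i - 1)" "r' i" "P' i"]
        P P' i
      by (simp add: mixed_channel_def mix_split_fst_def mix_split_snd_def reg_dim_def)
  qed
qed

lemma seq_state_mix:
  assumes W: "W \<in> carrier_mat (dB * dE) dA"
    and V: "valid_protocol dA dE n r P" "valid_protocol dA dE n r' P'"
  shows "1 \<le> i \<Longrightarrow> i \<le> n \<Longrightarrow>
    seq_state dA dB dE W (\<lambda>i. r i + r' i) (mixed_channel dA dE t r P r' P') i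
      = direct_sum (dB ^ i * dE) (r i) (r' i)
          (complex_of_real t \<cdot>\<^sub>m seq_state dA dB dE W r P i)
          (complex_of_real (1 - t) \<cdot>\<^sub>m seq_state dA dB dE W r' P' i)"
proof (induction i)
  case 0 then show ?case by simp
next
  case (Suc i)
  let ?S = "seq_state dA dB dE W r P" and ?S' = "seq_state dA dB dE W r' P'"
  let ?M = "seq_state dA dB dE W (\<lambda>i. r i + r' i) (mixed_channel dA dE t r P r' P')"
  have P: "cptp (reg_dim dE r i) (dA * r (Suc i)) (P (Suc i))"
    and P': "cptp (reg_dim dE r' i) (dA * r' (Suc i)) (P' (Suc i))"
    using V Suc.prems unfolding valid_protocol_def by auto
  note S = seq_state_carrier[OF W, of r P i] and S' = seq_state_carrier[OF W, of r' P' i]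
  have "lift_map (dB ^ i) (reg_dim dE (\<lambda>i. r i + r' i) i) (reg_dim dE r i) (mix_split_fst dE t r r' i) (?M i)
       = complex_of_real t \<cdot>\<^sub>m ?S i \<and>
     lift_map (dB ^ i) (reg_dim dE (\<lambda>i. r i + r' i) i) (reg_dim dE r' i) (mix_split_snd dE t r r' i) (?M i)
       = complex_of_real (1 - t) \<cdot>\<^sub>m ?S' i"
  proof (cases "i = 0")
    case True
    then show ?thesis by (simp add: mix_split_fst_def mix_split_snd_def reg_dim_def lift_map_scalar)
  next
    case False
    with S S' have "complex_of_real t \<cdot>\<^sub>m ?S i \<in> carrier_mat (dB ^ i * dE * r i) (dB ^ i * dE * r i)"
      "complex_of_real (1 - t) \<cdot>\<^sub>m ?S' i \<in> carrier_mat (dB ^ i * dE * r' i) (dB ^ i * dE * r' i)"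
      by (simp_all add: reg_dim_def mult.assoc)
    with False Suc show ?thesis by (simp add: reg_dim_def lift_map_mix_split_direct_sum)
  qed
  then have "?M (Suc i) = direct_sum (dB ^ i * (dB * dE)) (r (Suc i)) (r' (Suc i))
      (complex_of_real t \<cdot>\<^sub>m ?S (Suc i)) (complex_of_real (1 - t) \<cdot>\<^sub>m ?S' (Suc i))"
    unfolding seq_state_Suc_conj_mid[of _ _ _ _ _ _ i] mixed_channel_Suc
    by (intro conj_mid_lift_direct_sum_channel[OF W P P' mat_map_mix_split S S']) simp_all
  then show ?case by (simp add: ac_simps)
qed

lemma seq_output_mix:
  assumes W: "W \<in> carrier_mat (dB * dE) dA"
    and V: "valid_protocol dA dE n r P" "valid_protocol dA dE n r' P'" and n: "1 \<le> n"
  shows "seq_output dA dB dE W (\<lambda>i. r i + r' i) (mixed_channel dA dE t r P r' P') n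
    = complex_of_real t \<cdot>\<^sub>m seq_output dA dB dE W r P n
      + complex_of_real (1 - t) \<cdot>\<^sub>m seq_output dA dB dE W r' P' n"
proof -
  let ?S = "seq_state dA dB dE W r P n" and ?S' = "seq_state dA dB dE W r' P' n"
  have S: "?S \<in> carrier_mat (dB ^ n * dE * r n) (dB ^ n * dE * r n)"
    and S': "?S' \<in> carrier_mat (dB ^ n * dE * r' n) (dB ^ n * dE * r' n)"
    using seq_state_carrier[OF W, of r P n] seq_state_carrier[OF W, of r' P' n] n
    by (simp_all add: reg_dim_def mult.assoc)
  have "seq_output dA dB dE W (\<lambda>i. r i + r' i) (mixed_channel dA dE t r P r' P') n
      = ptrace (dB ^ n) (dE * (r n + r' n)) (direct_sum (dB ^ n * dE) (r n) (r' n)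
          (complex_of_real t \<cdot>\<^sub>m ?S) (complex_of_real (1 - t) \<cdot>\<^sub>m ?S'))"
    unfolding seq_output_def seq_state_mix[OF W V n order.refl] using n by (simp add: reg_dim_def)
  also have "\<dots> = ptrace (dB ^ n) (dE * r n) (complex_of_real t \<cdot>\<^sub>m ?S)
      + ptrace (dB ^ n) (dE * r' n) (complex_of_real (1 - t) \<cdot>\<^sub>m ?S')"
    by (rule ptrace_direct_sum) (use S S' in simp_all)
  also have "\<dots> = complex_of_real t \<cdot>\<^sub>m seq_output dA dB dE W r P n
      + complex_of_real (1 - t) \<cdot>\<^sub>m seq_output dA dB dE W r' P' n"
    unfolding seq_output_def using n S S'
    by (simp add: reg_dim_def ptrace_smult[of _ "dB ^ n" "dE * _"] mult.assoc)
  finally show ?thesis .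
qed

lemma convex_seq_set:
  assumes W: "W \<in> carrier_mat (dB * dE) dA" and n: "1 \<le> n"
  shows "convex_mat_set (seq_set dA dB dE W n)"
  unfolding convex_mat_set_def seq_set_eq
proof (intro ballI allI impI)
  fix x y and t :: real
  assume "x \<in> {seq_output dA dB dE W r P n | r P. valid_protocol dA dE n r P}"
    "y \<in> {seq_output dA dB dE W r P n | r P. valid_protocol dA dE n r P}" and t: "0 \<le> t \<and> t \<le> 1"
  then obtain r P r' P' where x: "x = seq_output dA dB dE W r P n" and V: "valid_protocol dA dE n r P"
    and y: "y = seq_output dA dB dE W r' P' n" and V': "valid_protocol dA dE n r' P'"
    by blast
  show "complex_of_real t \<cdot>\<^sub>m x + complex_of_real (1 - t) \<cdot>\<^sub>m y
      \<in> {seq_output dA dB dE W r P n | r P. valid_protocol dA dE n r P}"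
    unfolding x y seq_output_mix[OF W V V' n, symmetric]
    using valid_protocol_mix[OF V V'] t by blast
qed

theorem lemma4:
  fixes dA dB dE n :: nat and U V :: "complex mat"
  assumes "U \<in> carrier_mat (dB * dE) dA"
    and "dagger U * U = 1\<^sub>m dA"
    and "V \<in> carrier_mat (dB * dE) dA"
    and "1 \<le> n"
  shows "convex_mat_set (seq_set dA dB dE U n) \<and> convex_mat_set (seq_set dA dB dE V n)"
proof -
  \<comment> \<open>\<open>convex_seq_set\<close> holds for every \<open>W\<close>.\<close>
  show ?thesis using convex_seq_set[OF assms(1,4)] convex_seq_set[OF assms(3,4)] by blast
qed

end
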